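(* Let $(\mathcal C,\mathbb E,\mathfrak s)$ be an $n$-exangulated category. If $\mathcal C$ is weakly idempotent complete, then $\mathbb E\text{-}\mathrm{Ext}(\mathcal C)$ is also weakly idempotent complete.
   Context: $n\ge1$; $n$-exangulated categories in the sense of Herschend–Liu–Nakaoka ($\mathcal C$ additive, $\mathbb E\colon\mathcal C^{\mathrm{op}}\times\mathcal C\to\mathsf{Ab}$ biadditive, $\mathfrak s$ an exact realisation, axioms (EA1), (EA2), (EA2$^{\mathrm{op}}$)). An additive category is weakly idempotent complete if every retraction has a kernel (equivalently, every section has a cokernel). Write $a_*\alpha=\mathbb E(C,a)(\alpha)$, $c^*\beta=\mathbb E(c,A)(\beta)$. The category $\mathbb E\text{-}\mathrm{Ext}(\mathcal C)$ has objects all $\alpha\in\mathbb E(C,A)$; morphisms $\alpha\to\beta\in\mathbb E(D,B)$ are pairs $(a\colon A\to B,c\colon C\to D)$ with $a_*\alpha=c^*\beta$; composition and addition componentwise. *)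

theory Defs
  imports Main
begin

record ('o,'m) acat =
  Ob  :: "'o set"
  Ar  :: "'m set"
  dm  :: "'m \<Rightarrow> 'o"
  cd  :: "'m \<Rightarrow> 'o"
  cp  :: "'m \<Rightarrow> 'm \<Rightarrow> 'm"   (* cp K g f = g \<circ> f *)
  idn :: "'o \<Rightarrow> 'm"
  zr  :: "'o \<Rightarrow> 'o \<Rightarrow> 'm"
  ad  :: "'m \<Rightarrow> 'm \<Rightarrow> 'm"
  ng  :: "'m \<Rightarrow> 'm"

definition hom :: "('o,'m,'x) acat_scheme \<Rightarrow> 'o \<Rightarrow> 'o \<Rightarrow> 'm set" where
  "hom K A B = {f \<in> Ar K. dm K f = A \<and> cd K f = B}"

definition category :: "('o,'m,'x) acat_scheme \<Rightarrow> bool" where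
  "category K \<longleftrightarrow>
    (\<forall>f\<in>Ar K. dm K f \<in> Ob K \<and> cd K f \<in> Ob K) \<and>
    (\<forall>A\<in>Ob K. idn K A \<in> hom K A A) \<and>
    (\<forall>f\<in>Ar K. \<forall>g\<in>Ar K. cd K f = dm K g \<longrightarrow> cp K g f \<in> hom K (dm K f) (cd K g)) \<and>
    (\<forall>f\<in>Ar K. cp K f (idn K (dm K f)) = f \<and> cp K (idn K (cd K f)) f = f) \<and>
    (\<forall>f\<in>Ar K. \<forall>g\<in>Ar K. \<forall>h\<in>Ar K. cd K f = dm K g \<and> cd K g = dm K h \<longrightarrow>
        cp K h (cp K g f) = cp K (cp K h g) f)"

definition preadditive :: "('o,'m,'x) acat_scheme \<Rightarrow> bool" where
  "preadditive K \<longleftrightarrow> category K \<and>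
    (\<forall>A\<in>Ob K. \<forall>B\<in>Ob K. zr K A B \<in> hom K A B \<and>
       (\<forall>f\<in>hom K A B. \<forall>g\<in>hom K A B. ad K f g \<in> hom K A B \<and> ad K f g = ad K g f) \<and>
       (\<forall>f\<in>hom K A B. \<forall>g\<in>hom K A B. \<forall>h\<in>hom K A B. ad K (ad K f g) h = ad K f (ad K g h)) \<and>
       (\<forall>f\<in>hom K A B. ad K f (zr K A B) = f \<and> ng K f \<in> hom K A B \<and> ad K f (ng K f) = zr K A B)) \<and>
    (\<forall>f\<in>Ar K. \<forall>g\<in>Ar K. \<forall>h\<in>Ar K. dm K f = dm K g \<and> cd K f = cd K g \<and> cd K f = dm K h \<longrightarrow>
        cp K h (ad K f g) = ad K (cp K h f) (cp K h g)) \<and>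
    (\<forall>f\<in>Ar K. \<forall>g\<in>Ar K. \<forall>h\<in>Ar K. dm K f = dm K g \<and> cd K f = cd K g \<and> cd K h = dm K f \<longrightarrow>
        cp K (ad K f g) h = ad K (cp K f h) (cp K g h))"

definition is_zero_object :: "('o,'m,'x) acat_scheme \<Rightarrow> 'o \<Rightarrow> bool" where
  "is_zero_object K Z \<longleftrightarrow> Z \<in> Ob K \<and>
    (\<forall>A\<in>Ob K. hom K Z A = {zr K Z A} \<and> hom K A Z = {zr K A Z})"

definition is_biproduct :: "('o,'m,'x) acat_scheme \<Rightarrow> 'o \<Rightarrow> 'o \<Rightarrow> 'o \<Rightarrow> 'm \<Rightarrow> 'm \<Rightarrow> 'm \<Rightarrow> 'm \<Rightarrow> bool" where
  "is_biproduct K A B P i1 i2 p1 p2 \<longleftrightarrow> P \<in> Ob K \<and>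
    i1 \<in> hom K A P \<and> i2 \<in> hom K B P \<and> p1 \<in> hom K P A \<and> p2 \<in> hom K P B \<and>
    cp K p1 i1 = idn K A \<and> cp K p2 i2 = idn K B \<and>
    cp K p1 i2 = zr K B A \<and> cp K p2 i1 = zr K A B \<and>
    ad K (cp K i1 p1) (cp K i2 p2) = idn K P"

definition additive :: "('o,'m,'x) acat_scheme \<Rightarrow> bool" where
  "additive K \<longleftrightarrow> preadditive K \<and> (\<exists>Z. is_zero_object K Z) \<and>
    (\<forall>A\<in>Ob K. \<forall>B\<in>Ob K. \<exists>P i1 i2 p1 p2. is_biproduct K A B P i1 i2 p1 p2)"

definition is_kernel :: "('o,'m,'x) acat_scheme \<Rightarrow> 'm \<Rightarrow> 'm \<Rightarrow> bool" where
  "is_kernel K r k \<longleftrightarrow> k \<in> Ar K \<and> cd K k = dm K r \<and> cp K r k = zr K (dm K k) (cd K r) \<and>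
    (\<forall>t\<in>Ar K. cd K t = dm K r \<and> cp K r t = zr K (dm K t) (cd K r) \<longrightarrow>
       (\<exists>!u. u \<in> hom K (dm K t) (dm K k) \<and> cp K k u = t))"

definition is_retraction :: "('o,'m,'x) acat_scheme \<Rightarrow> 'm \<Rightarrow> bool" where
  "is_retraction K r \<longleftrightarrow> r \<in> Ar K \<and>
    (\<exists>s\<in>hom K (cd K r) (dm K r). cp K r s = idn K (cd K r))"

definition weakly_idempotent_complete :: "('o,'m,'x) acat_scheme \<Rightarrow> bool" where
  "weakly_idempotent_complete K \<longleftrightarrow> (\<forall>r. is_retraction K r \<longrightarrow> (\<exists>k. is_kernel K r k))"

section \<open>Biadditive functors E : C^op \<times> C \<rightarrow> Ab\<close>

record ('o,'m,'e) bifun =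
  Ex    :: "'o \<Rightarrow> 'o \<Rightarrow> 'e set"                (* Ex E C A = E(C,A) *)
  eadd  :: "'o \<Rightarrow> 'o \<Rightarrow> 'e \<Rightarrow> 'e \<Rightarrow> 'e"
  ezero :: "'o \<Rightarrow> 'o \<Rightarrow> 'e"
  eneg  :: "'o \<Rightarrow> 'o \<Rightarrow> 'e \<Rightarrow> 'e"
  cov   :: "'o \<Rightarrow> 'm \<Rightarrow> 'e \<Rightarrow> 'e"            (* cov E C a = E(C,a) = a_* *)
  ctr   :: "'m \<Rightarrow> 'o \<Rightarrow> 'e \<Rightarrow> 'e"            (* ctr E c A = E(c,A) = c^* *)

definition ab_group_on :: "'e set \<Rightarrow> ('e \<Rightarrow> 'e \<Rightarrow> 'e) \<Rightarrow> 'e \<Rightarrow> ('e \<Rightarrow> 'e) \<Rightarrow> bool" where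
  "ab_group_on S pl z mi \<longleftrightarrow> z \<in> S \<and>
    (\<forall>x\<in>S. \<forall>y\<in>S. pl x y \<in> S \<and> pl x y = pl y x) \<and>
    (\<forall>x\<in>S. \<forall>y\<in>S. \<forall>w\<in>S. pl (pl x y) w = pl x (pl y w)) \<and>
    (\<forall>x\<in>S. pl x z = x \<and> mi x \<in> S \<and> pl x (mi x) = z)"

definition biadditive_functor :: "('o,'m,'x) acat_scheme \<Rightarrow> ('o,'m,'e) bifun \<Rightarrow> bool" where
  "biadditive_functor K E \<longleftrightarrow>
    (\<forall>C\<in>Ob K. \<forall>A\<in>Ob K. ab_group_on (Ex E C A) (eadd E C A) (ezero E C A) (eneg E C A)) \<and>
    \<comment> \<open>covariant part E(C,-)\<close>
    (\<forall>C\<in>Ob K. \<forall>a\<in>Ar K. \<forall>\<alpha>\<in>Ex E C (dm K a). cov E C a \<alpha> \<in> Ex E C (cd K a)) \<and>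
    (\<forall>C\<in>Ob K. \<forall>a\<in>Ar K. \<forall>\<alpha>\<in>Ex E C (dm K a). \<forall>\<beta>\<in>Ex E C (dm K a).
        cov E C a (eadd E C (dm K a) \<alpha> \<beta>) = eadd E C (cd K a) (cov E C a \<alpha>) (cov E C a \<beta>)) \<and>
    (\<forall>C\<in>Ob K. \<forall>A\<in>Ob K. \<forall>\<alpha>\<in>Ex E C A. cov E C (idn K A) \<alpha> = \<alpha>) \<and>
    (\<forall>C\<in>Ob K. \<forall>a\<in>Ar K. \<forall>b\<in>Ar K. cd K a = dm K b \<longrightarrow>
        (\<forall>\<alpha>\<in>Ex E C (dm K a). cov E C (cp K b a) \<alpha> = cov E C b (cov E C a \<alpha>))) \<and>
    (\<forall>C\<in>Ob K. \<forall>a\<in>Ar K. \<forall>a'\<in>Ar K. dm K a = dm K a' \<and> cd K a = cd K a' \<longrightarrow>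
        (\<forall>\<alpha>\<in>Ex E C (dm K a). cov E C (ad K a a') \<alpha> = eadd E C (cd K a) (cov E C a \<alpha>) (cov E C a' \<alpha>))) \<and>
    \<comment> \<open>contravariant part E(-,A)\<close>
    (\<forall>A\<in>Ob K. \<forall>c\<in>Ar K. \<forall>\<alpha>\<in>Ex E (cd K c) A. ctr E c A \<alpha> \<in> Ex E (dm K c) A) \<and>
    (\<forall>A\<in>Ob K. \<forall>c\<in>Ar K. \<forall>\<alpha>\<in>Ex E (cd K c) A. \<forall>\<beta>\<in>Ex E (cd K c) A.
        ctr E c A (eadd E (cd K c) A \<alpha> \<beta>) = eadd E (dm K c) A (ctr E c A \<alpha>) (ctr E c A \<beta>)) \<and>
    (\<forall>C\<in>Ob K. \<forall>A\<in>Ob K. \<forall>\<alpha>\<in>Ex E C A. ctr E (idn K C) A \<alpha> = \<alpha>) \<and>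
    (\<forall>A\<in>Ob K. \<forall>c\<in>Ar K. \<forall>c'\<in>Ar K. cd K c' = dm K c \<longrightarrow>
        (\<forall>\<alpha>\<in>Ex E (cd K c) A. ctr E (cp K c c') A \<alpha> = ctr E c' A (ctr E c A \<alpha>))) \<and>
    (\<forall>A\<in>Ob K. \<forall>c\<in>Ar K. \<forall>c'\<in>Ar K. dm K c = dm K c' \<and> cd K c = cd K c' \<longrightarrow>
        (\<forall>\<alpha>\<in>Ex E (cd K c) A. ctr E (ad K c c') A \<alpha> = eadd E (dm K c) A (ctr E c A \<alpha>) (ctr E c' A \<alpha>))) \<and>
    \<comment> \<open>bifunctoriality\<close>
    (\<forall>a\<in>Ar K. \<forall>c\<in>Ar K. \<forall>\<alpha>\<in>Ex E (cd K c) (dm K a).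
        ctr E c (cd K a) (cov E (cd K c) a \<alpha>) = cov E (dm K c) a (ctr E c (dm K a) \<alpha>))"

section \<open>Complexes X^0 \<rightarrow> X^1 \<rightarrow> ... \<rightarrow> X^{n+1}, given by their differentials d 0, ..., d n\<close>

definition cobj :: "('o,'m,'x) acat_scheme \<Rightarrow> nat \<Rightarrow> (nat \<Rightarrow> 'm) \<Rightarrow> nat \<Rightarrow> 'o" where
  "cobj K n d i = (if i \<le> n then dm K (d i) else cd K (d n))"

definition is_complex :: "('o,'m,'x) acat_scheme \<Rightarrow> nat \<Rightarrow> (nat \<Rightarrow> 'm) \<Rightarrow> bool" where
  "is_complex K n d \<longleftrightarrow> (\<forall>i\<le>n. d i \<in> Ar K) \<and>
    (\<forall>i<n. cd K (d i) = dm K (d (Suc i)) \<and> cp K (d (Suc i)) (d i) = zr K (dm K (d i)) (cd K (d (Suc i))))"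

definition chain_map :: "('o,'m,'x) acat_scheme \<Rightarrow> nat \<Rightarrow> (nat \<Rightarrow> 'm) \<Rightarrow> (nat \<Rightarrow> 'm) \<Rightarrow> (nat \<Rightarrow> 'm) \<Rightarrow> bool" where
  "chain_map K n dX dY f \<longleftrightarrow>
    (\<forall>i\<le>Suc n. f i \<in> hom K (cobj K n dX i) (cobj K n dY i)) \<and>
    (\<forall>i\<le>n. cp K (dY i) (f i) = cp K (f (Suc i)) (dX i))"

definition homotopic :: "('o,'m,'x) acat_scheme \<Rightarrow> nat \<Rightarrow> (nat \<Rightarrow> 'm) \<Rightarrow> (nat \<Rightarrow> 'm) \<Rightarrow> (nat \<Rightarrow> 'm) \<Rightarrow> (nat \<Rightarrow> 'm) \<Rightarrow> bool" where
  "homotopic K n dX dY f g \<longleftrightarrow> (\<exists>h.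
    (\<forall>i. 1 \<le> i \<and> i \<le> Suc n \<longrightarrow> h i \<in> hom K (cobj K n dX i) (cobj K n dY (i - 1))) \<and>
    cp K (h 1) (dX 0) = zr K (cobj K n dX 0) (cobj K n dY 0) \<and>
    cp K (dY n) (h (Suc n)) = zr K (cobj K n dX (Suc n)) (cobj K n dY (Suc n)) \<and>
    (\<forall>i. 1 \<le> i \<and> i \<le> n \<longrightarrow>
       ad K (g i) (ng K (f i)) = ad K (cp K (dY (i - 1)) (h i)) (cp K (h (Suc i)) (dX i))))"

definition homotopy_equivalent :: "('o,'m,'x) acat_scheme \<Rightarrow> nat \<Rightarrow> (nat \<Rightarrow> 'm) \<Rightarrow> (nat \<Rightarrow> 'm) \<Rightarrow> bool" where
  "homotopy_equivalent K n dX dY \<longleftrightarrow>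
    cobj K n dX 0 = cobj K n dY 0 \<and> cobj K n dX (Suc n) = cobj K n dY (Suc n) \<and>
    (\<exists>f g. chain_map K n dX dY f \<and> chain_map K n dY dX g \<and>
       f 0 = idn K (cobj K n dX 0) \<and> f (Suc n) = idn K (cobj K n dX (Suc n)) \<and>
       g 0 = idn K (cobj K n dX 0) \<and> g (Suc n) = idn K (cobj K n dX (Suc n)) \<and>
       homotopic K n dX dX (\<lambda>i. cp K (g i) (f i)) (\<lambda>i. idn K (cobj K n dX i)) \<and>
       homotopic K n dY dY (\<lambda>i. cp K (f i) (g i)) (\<lambda>i. idn K (cobj K n dY i)))"

definition is_exangle :: "('o,'m,'x) acat_scheme \<Rightarrow> ('o,'m,'e) bifun \<Rightarrow> nat \<Rightarrow> 'o \<Rightarrow> 'o \<Rightarrow> 'e \<Rightarrow> (nat \<Rightarrow> 'm) \<Rightarrow> bool" where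
  "is_exangle K E n C A \<delta> d \<longleftrightarrow>
    is_complex K n d \<and> cobj K n d 0 = A \<and> cobj K n d (Suc n) = C \<and> \<delta> \<in> Ex E C A \<and>
    cov E C (d 0) \<delta> = ezero E C (cobj K n d 1) \<and>
    ctr E (d n) A \<delta> = ezero E (cobj K n d n) A \<and>
    \<comment> \<open>exactness of C(-,X^0) \<rightarrow> ... \<rightarrow> C(-,X^{n+1}) \<rightarrow> E(-,X^0)\<close>
    (\<forall>W\<in>Ob K.
      (\<forall>i. 1 \<le> i \<and> i \<le> n \<longrightarrow> (\<forall>g\<in>hom K W (cobj K n d i).
          cp K (d i) g = zr K W (cobj K n d (Suc i)) \<longleftrightarrow>
          (\<exists>h\<in>hom K W (cobj K n d (i - 1)). g = cp K (d (i - 1)) h))) \<and>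
      (\<forall>g\<in>hom K W C. ctr E g A \<delta> = ezero E W A \<longleftrightarrow>
          (\<exists>h\<in>hom K W (cobj K n d n). g = cp K (d n) h))) \<and>
    \<comment> \<open>exactness of C(X^{n+1},-) \<rightarrow> ... \<rightarrow> C(X^0,-) \<rightarrow> E(X^{n+1},-)\<close>
    (\<forall>W\<in>Ob K.
      (\<forall>i. 1 \<le> i \<and> i \<le> n \<longrightarrow> (\<forall>g\<in>hom K (cobj K n d i) W.
          cp K g (d (i - 1)) = zr K (cobj K n d (i - 1)) W \<longleftrightarrow>
          (\<exists>h\<in>hom K (cobj K n d (Suc i)) W. g = cp K h (d i)))) \<and>
      (\<forall>g\<in>hom K A W. cov E C g \<delta> = ezero E C W \<longleftrightarrow>
          (\<exists>h\<in>hom K (cobj K n d 1) W. g = cp K h (d 0))))"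

definition bpd :: "('o,'m,'x) acat_scheme \<Rightarrow> 'o \<Rightarrow> 'o \<Rightarrow> 'o \<times> 'm \<times> 'm \<times> 'm \<times> 'm" where
  "bpd K A B = (SOME (P,i1,i2,p1,p2). is_biproduct K A B P i1 i2 p1 p2)"

definition bobj where "bobj K A B = fst (bpd K A B)"
definition bi1 where "bi1 K A B = fst (snd (bpd K A B))"
definition bi2 where "bi2 K A B = fst (snd (snd (bpd K A B)))"
definition bp1 where "bp1 K A B = fst (snd (snd (snd (bpd K A B))))"
definition bp2 where "bp2 K A B = snd (snd (snd (snd (bpd K A B))))"

text \<open>column [u; v] : W \<rightarrow> A \<oplus> B, row [u, v] : A \<oplus> B \<rightarrow> W,
  matrix [[a, b], [c, e]] : A \<oplus> B \<rightarrow> A' \<oplus> B'.\<close>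
definition mcol where
  "mcol K A B u v = ad K (cp K (bi1 K A B) u) (cp K (bi2 K A B) v)"
definition mrow where
  "mrow K A B u v = ad K (cp K u (bp1 K A B)) (cp K v (bp2 K A B))"
definition mmat where
  "mmat K A B A' B' a b c e =
     ad K (ad K (cp K (bi1 K A' B') (cp K a (bp1 K A B))) (cp K (bi1 K A' B') (cp K b (bp2 K A B))))
          (ad K (cp K (bi2 K A' B') (cp K c (bp1 K A B))) (cp K (bi2 K A' B') (cp K e (bp2 K A B))))"

text \<open>Mapping cone of f : X \<rightarrow> Y with f^0 = 1:
  X^1 \<rightarrow> X^2 \<oplus> Y^1 \<rightarrow> ... \<rightarrow> X^{n+1} \<oplus> Y^n \<rightarrow> Y^{n+1}.\<close>
definition mcone :: "('o,'m,'x) acat_scheme \<Rightarrow> nat \<Rightarrow> (nat \<Rightarrow> 'm) \<Rightarrow> (nat \<Rightarrow> 'm) \<Rightarrow> (nat \<Rightarrow> 'm) \<Rightarrow> nat \<Rightarrow> 'm" where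
  "mcone K n dX dY f i =
    (let X = cobj K n dX; Y = cobj K n dY in
     if i = 0 then mcol K (X 2) (Y 1) (ng K (dX 1)) (f 1)
     else if i < n then mmat K (X (Suc i)) (Y i) (X (Suc (Suc i))) (Y (Suc i))
                          (ng K (dX (Suc i))) (zr K (Y i) (X (Suc (Suc i)))) (f (Suc i)) (dY i)
     else mrow K (X (Suc n)) (Y n) (f (Suc n)) (dY n))"

text \<open>Dual cone of f : X \<rightarrow> Y with f^{n+1} = 1:
  X^0 \<rightarrow> X^1 \<oplus> Y^0 \<rightarrow> ... \<rightarrow> X^n \<oplus> Y^{n-1} \<rightarrow> Y^n.\<close>
definition mcocone :: "('o,'m,'x) acat_scheme \<Rightarrow> nat \<Rightarrow> (nat \<Rightarrow> 'm) \<Rightarrow> (nat \<Rightarrow> 'm) \<Rightarrow> (nat \<Rightarrow> 'm) \<Rightarrow> nat \<Rightarrow> 'm" where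
  "mcocone K n dX dY f i =
    (let X = cobj K n dX; Y = cobj K n dY in
     if i = 0 then mcol K (X 1) (Y 0) (ng K (dX 0)) (f 0)
     else if i < n then mmat K (X i) (Y (i - 1)) (X (Suc i)) (Y i)
                          (ng K (dX i)) (zr K (Y (i - 1)) (X (Suc i))) (f i) (dY (i - 1))
     else mrow K (X n) (Y (n - 1)) (f n) (dY (n - 1)))"

text \<open>s C A \<delta> is the class s(\<delta>) of complexes realising \<delta> \<in> E(C,A).\<close>

definition exact_realisation ::
  "('o,'m,'x) acat_scheme \<Rightarrow> ('o,'m,'e) bifun \<Rightarrow> nat \<Rightarrow> ('o \<Rightarrow> 'o \<Rightarrow> 'e \<Rightarrow> (nat \<Rightarrow> 'm) set) \<Rightarrow> bool" where
  "exact_realisation K E n s \<longleftrightarrow>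
    \<comment> \<open>s(\<delta>) is a homotopy equivalence class, and (R1) its members are n-exangles\<close>
    (\<forall>C\<in>Ob K. \<forall>A\<in>Ob K. \<forall>\<delta>\<in>Ex E C A.
       s C A \<delta> \<noteq> {} \<and>
       (\<forall>d\<in>s C A \<delta>. is_exangle K E n C A \<delta> d) \<and>
       (\<forall>d\<in>s C A \<delta>. \<forall>d'. is_complex K n d' \<longrightarrow> (d' \<in> s C A \<delta> \<longleftrightarrow> homotopy_equivalent K n d d'))) \<and>
    \<comment> \<open>(R0)\<close>
    (\<forall>C\<in>Ob K. \<forall>A\<in>Ob K. \<forall>D\<in>Ob K. \<forall>B\<in>Ob K. \<forall>\<alpha>\<in>Ex E C A. \<forall>\<beta>\<in>Ex E D B.
       \<forall>a\<in>hom K A B. \<forall>c\<in>hom K C D. cov E C a \<alpha> = ctr E c B \<beta> \<longrightarrow>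
       (\<forall>dX\<in>s C A \<alpha>. \<forall>dY\<in>s D B \<beta>. \<exists>f. chain_map K n dX dY f \<and> f 0 = a \<and> f (Suc n) = c)) \<and>
    \<comment> \<open>(R2)\<close>
    (\<forall>Z. is_zero_object K Z \<longrightarrow> (\<forall>A\<in>Ob K.
       (\<lambda>i. if i = 0 then idn K A else if i = 1 then zr K A Z else zr K Z Z) \<in> s Z A (ezero E Z A) \<and>
       (\<lambda>i. if i = n then idn K A else if Suc i = n then zr K Z A else zr K Z Z) \<in> s A Z (ezero E A Z)))"

definition s_inflation where
  "s_inflation K E n s f \<longleftrightarrow> (\<exists>C\<in>Ob K. \<exists>A\<in>Ob K. \<exists>\<delta>\<in>Ex E C A. \<exists>d\<in>s C A \<delta>. d 0 = f)"

definition s_deflation where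
  "s_deflation K E n s f \<longleftrightarrow> (\<exists>C\<in>Ob K. \<exists>A\<in>Ob K. \<exists>\<delta>\<in>Ex E C A. \<exists>d\<in>s C A \<delta>. d n = f)"

definition n_exangulated ::
  "nat \<Rightarrow> ('o,'m,'x) acat_scheme \<Rightarrow> ('o,'m,'e) bifun \<Rightarrow> ('o \<Rightarrow> 'o \<Rightarrow> 'e \<Rightarrow> (nat \<Rightarrow> 'm) set) \<Rightarrow> bool" where
  "n_exangulated n K E s \<longleftrightarrow> 1 \<le> n \<and> additive K \<and> biadditive_functor K E \<and> exact_realisation K E n s \<and>
    \<comment> \<open>(EA1)\<close>
    (\<forall>f\<in>Ar K. \<forall>g\<in>Ar K. cd K f = dm K g \<and> s_inflation K E n s f \<and> s_inflation K E n s g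
        \<longrightarrow> s_inflation K E n s (cp K g f)) \<and>
    (\<forall>f\<in>Ar K. \<forall>g\<in>Ar K. cd K f = dm K g \<and> s_deflation K E n s f \<and> s_deflation K E n s g
        \<longrightarrow> s_deflation K E n s (cp K g f)) \<and>
    \<comment> \<open>(EA2)\<close>
    (\<forall>D\<in>Ob K. \<forall>A\<in>Ob K. \<forall>\<delta>\<in>Ex E D A. \<forall>c\<in>Ar K. cd K c = D \<longrightarrow>
       (\<forall>dX\<in>s (dm K c) A (ctr E c A \<delta>). \<forall>dY\<in>s D A \<delta>.
          \<exists>f. chain_map K n dX dY f \<and> f 0 = idn K A \<and> f (Suc n) = c \<and>
              mcone K n dX dY f \<in> s D (cobj K n dX 1) (cov E D (dX 0) \<delta>))) \<and>
    \<comment> \<open>(EA2 op)\<close>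
    (\<forall>D\<in>Ob K. \<forall>A\<in>Ob K. \<forall>\<delta>\<in>Ex E D A. \<forall>a\<in>Ar K. dm K a = A \<longrightarrow>
       (\<forall>dX\<in>s D A \<delta>. \<forall>dY\<in>s D (cd K a) (cov E D a \<delta>).
          \<exists>f. chain_map K n dX dY f \<and> f 0 = a \<and> f (Suc n) = idn K D \<and>
              mcocone K n dX dY f \<in> s (cobj K n dY n) A (ctr E (dY n) A \<delta>)))"

definition EExt :: "('o,'m) acat \<Rightarrow> ('o,'m,'e) bifun \<Rightarrow>
    ('o \<times> 'o \<times> 'e, ('o \<times> 'o \<times> 'e) \<times> ('o \<times> 'o \<times> 'e) \<times> ('m \<times> 'm)) acat" where
  "EExt K E = \<lparr>
     Ob = {(C, A, \<alpha>). C \<in> Ob K \<and> A \<in> Ob K \<and> \<alpha> \<in> Ex E C A},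
     Ar = {((C, A, \<alpha>), (D, B, \<beta>), (a, c)). C \<in> Ob K \<and> A \<in> Ob K \<and> \<alpha> \<in> Ex E C A \<and>
             D \<in> Ob K \<and> B \<in> Ob K \<and> \<beta> \<in> Ex E D B \<and> a \<in> hom K A B \<and> c \<in> hom K C D \<and>
             cov E C a \<alpha> = ctr E c B \<beta>},
     dm = (\<lambda>(X, Y, m). X),
     cd = (\<lambda>(X, Y, m). Y),
     cp = (\<lambda>(Y', Z, (b, d)) (X, Y, (a, c)). (X, Z, (cp K b a, cp K d c))),
     idn = (\<lambda>(C, A, \<alpha>). ((C, A, \<alpha>), (C, A, \<alpha>), (idn K A, idn K C))),
     zr = (\<lambda>(C, A, \<alpha>) (D, B, \<beta>). ((C, A, \<alpha>), (D, B, \<beta>), (zr K A B, zr K C D))),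
     ad = (\<lambda>(X, Y, (a, c)) (X', Y', (a', c')). (X, Y, (ad K a a', ad K c c'))),
     ng = (\<lambda>(X, Y, (a, c)). (X, Y, (ng K a, ng K c))) \<rparr>"

end

theory Submission
  imports Defs
begin

(* A retraction (a, c) in E-Ext(C) has retractions a: A -> B and c: C -> D as components;
   let ka: A0 -> A and kc: C0 -> C be their kernels. For a section s of a, the kernel ka
   splits via some p with p ka = 1 and ka p = 1 - s a. The kernel of (a, c) is (ka, kc) with
   source p_* kc^* alpha in E(C0, A0): it is a morphism because a_* kc^* alpha =
   kc^* c^* beta = 0, so 1 - s a fixes kc^* alpha; and any factorisations through ka and kc
   in C are automatically compatible with the extensions, because p ka = 1. *)

locale preadditive_category =
  fixes K :: "('o,'m,'x) acat_scheme"
  assumes preadditive: "preadditive K"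
begin

lemma category: "category K"
  using preadditive unfolding preadditive_def by blast

lemma hom_Ob: "f \<in> hom K A B \<Longrightarrow> A \<in> Ob K \<and> B \<in> Ob K"
  using category unfolding category_def hom_def by blast

lemma comp_hom: "f \<in> hom K A B \<Longrightarrow> g \<in> hom K B C \<Longrightarrow> cp K g f \<in> hom K A C"
  using category unfolding category_def hom_def by auto

lemma id_hom: "A \<in> Ob K \<Longrightarrow> idn K A \<in> hom K A A"
  using category unfolding category_def by blast

lemma comp_id_right: "f \<in> hom K A B \<Longrightarrow> cp K f (idn K A) = f"
  using category unfolding category_def hom_def by auto

lemma comp_id_left: "f \<in> hom K A B \<Longrightarrow> cp K (idn K B) f = f"
  using category unfolding category_def hom_def by auto

lemma comp_assoc:
  "f \<in> hom K A B \<Longrightarrow> g \<in> hom K B C \<Longrightarrow> h \<in> hom K C D \<Longrightarrow> cp K h (cp K g f) = cp K (cp K h g) f"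
  using category unfolding category_def hom_def by auto

lemma zero_hom: "A \<in> Ob K \<Longrightarrow> B \<in> Ob K \<Longrightarrow> zr K A B \<in> hom K A B"
  using preadditive unfolding preadditive_def by blast

lemma add_hom: "f \<in> hom K A B \<Longrightarrow> g \<in> hom K A B \<Longrightarrow> ad K f g \<in> hom K A B"
  using preadditive hom_Ob unfolding preadditive_def by blast

lemma add_commute: "f \<in> hom K A B \<Longrightarrow> g \<in> hom K A B \<Longrightarrow> ad K f g = ad K g f"
  using preadditive hom_Ob unfolding preadditive_def by blast

lemma add_assoc:
  "f \<in> hom K A B \<Longrightarrow> g \<in> hom K A B \<Longrightarrow> h \<in> hom K A B \<Longrightarrow> ad K (ad K f g) h = ad K f (ad K g h)"
  using preadditive hom_Ob unfolding preadditive_def by blast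

lemma add_zero: "f \<in> hom K A B \<Longrightarrow> ad K f (zr K A B) = f"
  using preadditive hom_Ob unfolding preadditive_def by blast

lemma neg_hom: "f \<in> hom K A B \<Longrightarrow> ng K f \<in> hom K A B"
  using preadditive hom_Ob unfolding preadditive_def by blast

lemma add_neg: "f \<in> hom K A B \<Longrightarrow> ad K f (ng K f) = zr K A B"
  using preadditive hom_Ob unfolding preadditive_def by blast

lemma comp_add_right:
  "f \<in> hom K A B \<Longrightarrow> g \<in> hom K A B \<Longrightarrow> h \<in> hom K B C \<Longrightarrow> cp K h (ad K f g) = ad K (cp K h f) (cp K h g)"
  using preadditive unfolding preadditive_def hom_def by auto

lemma comp_add_left:
  "f \<in> hom K B C \<Longrightarrow> g \<in> hom K B C \<Longrightarrow> h \<in> hom K A B \<Longrightarrow> cp K (ad K f g) h = ad K (cp K f h) (cp K g h)"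
  using preadditive unfolding preadditive_def hom_def by auto

lemma zero_add: "f \<in> hom K A B \<Longrightarrow> ad K (zr K A B) f = f"
  using add_commute add_zero zero_hom hom_Ob by metis

lemma add_left_cancel:
  assumes f: "f \<in> hom K A B" and g: "g \<in> hom K A B" and h: "h \<in> hom K A B"
    and eq: "ad K f g = ad K f h"
  shows "g = h"
proof -
  have nf: "ng K f \<in> hom K A B" using f by (rule neg_hom)
  have nff: "ad K (ng K f) f = zr K A B" using add_commute[OF nf f] add_neg[OF f] by simp
  have "g = ad K (ad K (ng K f) f) g" using nff zero_add[OF g] by simp
  also have "\<dots> = ad K (ad K (ng K f) f) h"
    using add_assoc[OF nf f g] add_assoc[OF nf f h] eq by simp
  also have "\<dots> = h" using nff zero_add[OF h] by simp
  finally show ?thesis .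
qed

lemma neg_unique: "f \<in> hom K A B \<Longrightarrow> g \<in> hom K A B \<Longrightarrow> ad K f g = zr K A B \<Longrightarrow> g = ng K f"
  by (metis add_left_cancel add_neg neg_hom)

lemma comp_zero_right:
  assumes h: "h \<in> hom K B C" and A: "A \<in> Ob K"
  shows "cp K h (zr K A B) = zr K A C"
proof -
  have B: "B \<in> Ob K" and C: "C \<in> Ob K" using hom_Ob[OF h] by auto
  have z: "zr K A B \<in> hom K A B" using zero_hom[OF A B] .
  have hz: "cp K h (zr K A B) \<in> hom K A C" using comp_hom[OF z h] .
  have "ad K (cp K h (zr K A B)) (cp K h (zr K A B)) = ad K (cp K h (zr K A B)) (zr K A C)"
    using comp_add_right[OF z z h] add_zero[OF z] add_zero[OF hz] by simp
  then show ?thesis using add_left_cancel[OF hz hz zero_hom[OF A C]] by simp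
qed

lemma comp_zero_left:
  assumes h: "h \<in> hom K A B" and C: "C \<in> Ob K"
  shows "cp K (zr K B C) h = zr K A C"
proof -
  have A: "A \<in> Ob K" and B: "B \<in> Ob K" using hom_Ob[OF h] by auto
  have z: "zr K B C \<in> hom K B C" using zero_hom[OF B C] .
  have zh: "cp K (zr K B C) h \<in> hom K A C" using comp_hom[OF h z] .
  have "ad K (cp K (zr K B C) h) (cp K (zr K B C) h) = ad K (cp K (zr K B C) h) (zr K A C)"
    using comp_add_left[OF z z h] add_zero[OF z] add_zero[OF zh] by simp
  then show ?thesis using add_left_cancel[OF zh zh zero_hom[OF A C]] by simp
qed

lemma comp_neg_right:
  assumes f: "f \<in> hom K A B" and h: "h \<in> hom K B C"
  shows "cp K h (ng K f) = ng K (cp K h f)"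
proof (rule neg_unique)
  show "cp K h f \<in> hom K A C" "cp K h (ng K f) \<in> hom K A C"
    using comp_hom[OF f h] comp_hom[OF neg_hom[OF f] h] .
  show "ad K (cp K h f) (cp K h (ng K f)) = zr K A C"
    using comp_add_right[OF f neg_hom[OF f] h] add_neg[OF f] comp_zero_right[OF h] hom_Ob[OF f]
    by simp
qed

lemma comp_neg_left:
  assumes f: "f \<in> hom K B C" and h: "h \<in> hom K A B"
  shows "cp K (ng K f) h = ng K (cp K f h)"
proof (rule neg_unique)
  show "cp K f h \<in> hom K A C" "cp K (ng K f) h \<in> hom K A C"
    using comp_hom[OF h f] comp_hom[OF h neg_hom[OF f]] .
  show "ad K (cp K f h) (cp K (ng K f) h) = zr K A C"
    using comp_add_left[OF f neg_hom[OF f] h] add_neg[OF f] comp_zero_left[OF h] hom_Ob[OF f]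
    by simp
qed

lemma neg_zero: "A \<in> Ob K \<Longrightarrow> B \<in> Ob K \<Longrightarrow> ng K (zr K A B) = zr K A B"
  by (metis add_zero neg_unique zero_hom)

end

lemma is_kernelD:
  assumes k: "is_kernel K a k" and a: "a \<in> hom K A B"
  shows is_kernel_hom: "k \<in> hom K (dm K k) A"
    and is_kernel_comp: "cp K a k = zr K (dm K k) B"
    and is_kernel_factor:
      "\<And>t. t \<in> hom K H A \<Longrightarrow> cp K a t = zr K H B \<Longrightarrow> \<exists>!u. u \<in> hom K H (dm K k) \<and> cp K k u = t"
proof -
  have a': "a \<in> Ar K" "dm K a = A" "cd K a = B" using a unfolding hom_def by simp_all
  have k': "k \<in> Ar K" "cd K k = A" "cp K a k = zr K (dm K k) B"
    using k a' unfolding is_kernel_def by simp_all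
  have univ: "\<forall>t\<in>Ar K. cd K t = A \<and> cp K a t = zr K (dm K t) B \<longrightarrow>
       (\<exists>!u. u \<in> hom K (dm K t) (dm K k) \<and> cp K k u = t)"
    using k a' unfolding is_kernel_def by simp
  show "k \<in> hom K (dm K k) A" using k' unfolding hom_def by simp
  show "cp K a k = zr K (dm K k) B" using k'(3) .
  fix t assume t: "t \<in> hom K H A" and at: "cp K a t = zr K H B"
  have t': "t \<in> Ar K" "dm K t = H" "cd K t = A" using t unfolding hom_def by simp_all
  show "\<exists>!u. u \<in> hom K H (dm K k) \<and> cp K k u = t"
    using univ[rule_format, OF t'(1)] t'(2,3) at by simp
qed

context preadditive_category
begin

lemma kernel_cancel:
  assumes k: "is_kernel K a k" and a: "a \<in> hom K A B"
    and u: "u \<in> hom K H (dm K k)" and w: "w \<in> hom K H (dm K k)" and eq: "cp K k u = cp K k w"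
  shows "u = w"
proof -
  have kh: "k \<in> hom K (dm K k) A" by (rule is_kernel_hom[OF k a])
  have "cp K a (cp K k u) = zr K H B"
    using comp_assoc[OF u kh a] is_kernel_comp[OF k a] comp_zero_left[OF u] hom_Ob[OF a] by simp
  then have "\<exists>!v. v \<in> hom K H (dm K k) \<and> cp K k v = cp K k u"
    by (rule is_kernel_factor[OF k a comp_hom[OF u kh]])
  then show ?thesis
    using u w eq by (metis (no_types))
qed

lemma retraction_kernel_split:
  assumes a: "a \<in> hom K A B" and s: "s \<in> hom K B A" and as: "cp K a s = idn K B"
    and k: "is_kernel K a k"
  obtains p where "p \<in> hom K A (dm K k)" "cp K p k = idn K (dm K k)"
    "cp K k p = ad K (idn K A) (ng K (cp K s a))"
proof -
  let ?A0 = "dm K k"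
  have kh: "k \<in> hom K ?A0 A" by (rule is_kernel_hom[OF k a])
  have A: "A \<in> Ob K" and A0: "?A0 \<in> Ob K" using hom_Ob[OF kh] by auto
  define x where "x = cp K s a"
  define e where "e = ad K (idn K A) (ng K x)"
  have xh: "x \<in> hom K A A" unfolding x_def by (rule comp_hom[OF a s])
  have eh: "e \<in> hom K A A" unfolding e_def by (rule add_hom[OF id_hom[OF A] neg_hom[OF xh]])
  have ax: "cp K a x = a"
    unfolding x_def using comp_assoc[OF a s a] as comp_id_left[OF a] by simp
  have ae: "cp K a e = zr K A B"
    unfolding e_def
    using comp_add_right[OF id_hom[OF A] neg_hom[OF xh] a] comp_id_right[OF a]
      comp_neg_right[OF xh a] ax add_neg[OF a] by simp
  obtain p where p: "p \<in> hom K A ?A0" "cp K k p = e"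
    using is_kernel_factor[OF k a eh ae] by (blast dest: ex1_implies_ex)
  have xk: "cp K x k = zr K ?A0 A"
    unfolding x_def
    using comp_assoc[OF kh a s] is_kernel_comp[OF k a] comp_zero_right[OF s A0] by simp
  have ek: "cp K e k = k"
    unfolding e_def
    using comp_add_left[OF id_hom[OF A] neg_hom[OF xh] kh] comp_id_left[OF kh]
      comp_neg_left[OF xh kh] xk neg_zero[OF A0 A] add_zero[OF kh] by simp
  have "cp K k (cp K p k) = cp K k (idn K ?A0)"
    using comp_assoc[OF kh p(1) kh] p(2) ek comp_id_right[OF kh] by simp
  then have "cp K p k = idn K ?A0"
    by (rule kernel_cancel[OF k a comp_hom[OF kh p(1)] id_hom[OF A0]])
  then show thesis using p unfolding e_def x_def by (intro that)
qed

end

lemma ab_group_on_zero_mem: "ab_group_on S pl z mi \<Longrightarrow> z \<in> S"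
  unfolding ab_group_on_def by blast

lemma ab_group_on_add_zero: "ab_group_on S pl z mi \<Longrightarrow> x \<in> S \<Longrightarrow> pl x z = x"
  unfolding ab_group_on_def by blast

lemma ab_group_on_zero_add: "ab_group_on S pl z mi \<Longrightarrow> x \<in> S \<Longrightarrow> pl z x = x"
  unfolding ab_group_on_def by metis

lemma ab_group_on_idem_eq_zero: "ab_group_on S pl z mi \<Longrightarrow> x \<in> S \<Longrightarrow> pl x x = x \<Longrightarrow> x = z"
  unfolding ab_group_on_def by metis

locale biadditive_bifunctor = preadditive_category K for K :: "('o,'m) acat" +
  fixes E :: "('o,'m,'e) bifun"
  assumes biadditive: "biadditive_functor K E"
begin

lemma ext_ab_group:
  "C \<in> Ob K \<Longrightarrow> A \<in> Ob K \<Longrightarrow> ab_group_on (bifun.Ex E C A) (eadd E C A) (ezero E C A) (eneg E C A)"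
  using biadditive unfolding biadditive_functor_def by auto

lemma cov_closed: "C \<in> Ob K \<Longrightarrow> a \<in> hom K A B \<Longrightarrow> x \<in> bifun.Ex E C A \<Longrightarrow> cov E C a x \<in> bifun.Ex E C B"
  using biadditive unfolding biadditive_functor_def hom_def by auto

lemma cov_eadd:
  "C \<in> Ob K \<Longrightarrow> a \<in> hom K A B \<Longrightarrow> x \<in> bifun.Ex E C A \<Longrightarrow> y \<in> bifun.Ex E C A \<Longrightarrow>
   cov E C a (eadd E C A x y) = eadd E C B (cov E C a x) (cov E C a y)"
  using biadditive unfolding biadditive_functor_def hom_def by auto

lemma cov_id: "C \<in> Ob K \<Longrightarrow> A \<in> Ob K \<Longrightarrow> x \<in> bifun.Ex E C A \<Longrightarrow> cov E C (idn K A) x = x"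
  using biadditive unfolding biadditive_functor_def by auto

lemma cov_comp:
  "C \<in> Ob K \<Longrightarrow> a \<in> hom K A B \<Longrightarrow> b \<in> hom K B B' \<Longrightarrow> x \<in> bifun.Ex E C A \<Longrightarrow>
   cov E C (cp K b a) x = cov E C b (cov E C a x)"
  using biadditive unfolding biadditive_functor_def hom_def by auto

lemma cov_add:
  "C \<in> Ob K \<Longrightarrow> a \<in> hom K A B \<Longrightarrow> a' \<in> hom K A B \<Longrightarrow> x \<in> bifun.Ex E C A \<Longrightarrow>
   cov E C (ad K a a') x = eadd E C B (cov E C a x) (cov E C a' x)"
  using biadditive unfolding biadditive_functor_def hom_def by auto

lemma ctr_closed: "A \<in> Ob K \<Longrightarrow> c \<in> hom K C' C \<Longrightarrow> x \<in> bifun.Ex E C A \<Longrightarrow> ctr E c A x \<in> bifun.Ex E C' A"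
  using biadditive unfolding biadditive_functor_def hom_def by auto

lemma ctr_comp:
  "A \<in> Ob K \<Longrightarrow> c' \<in> hom K C0 C1 \<Longrightarrow> c \<in> hom K C1 C2 \<Longrightarrow> x \<in> bifun.Ex E C2 A \<Longrightarrow>
   ctr E (cp K c c') A x = ctr E c' A (ctr E c A x)"
  using biadditive unfolding biadditive_functor_def hom_def by auto

lemma ctr_add:
  "A \<in> Ob K \<Longrightarrow> c \<in> hom K C' C \<Longrightarrow> c' \<in> hom K C' C \<Longrightarrow> x \<in> bifun.Ex E C A \<Longrightarrow>
   ctr E (ad K c c') A x = eadd E C' A (ctr E c A x) (ctr E c' A x)"
  using biadditive unfolding biadditive_functor_def hom_def by auto

lemma ctr_cov_commute:
  "a \<in> hom K A B \<Longrightarrow> c \<in> hom K C' C \<Longrightarrow> x \<in> bifun.Ex E C A \<Longrightarrow>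
   ctr E c B (cov E C a x) = cov E C' a (ctr E c A x)"
  using biadditive unfolding biadditive_functor_def hom_def by auto

lemma cov_zero:
  assumes C: "C \<in> Ob K" and A: "A \<in> Ob K" and B: "B \<in> Ob K" and x: "x \<in> bifun.Ex E C A"
  shows "cov E C (zr K A B) x = ezero E C B"
proof -
  have z: "zr K A B \<in> hom K A B" by (rule zero_hom[OF A B])
  have "eadd E C B (cov E C (zr K A B) x) (cov E C (zr K A B) x) = cov E C (zr K A B) x"
    using cov_add[OF C z z x] add_zero[OF z] by simp
  then show ?thesis by (rule ab_group_on_idem_eq_zero[OF ext_ab_group[OF C B] cov_closed[OF C z x]])
qed

lemma ctr_zero:
  assumes C': "C' \<in> Ob K" and C: "C \<in> Ob K" and A: "A \<in> Ob K" and x: "x \<in> bifun.Ex E C A"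
  shows "ctr E (zr K C' C) A x = ezero E C' A"
proof -
  have z: "zr K C' C \<in> hom K C' C" by (rule zero_hom[OF C' C])
  have "eadd E C' A (ctr E (zr K C' C) A x) (ctr E (zr K C' C) A x) = ctr E (zr K C' C) A x"
    using ctr_add[OF A z z x] add_zero[OF z] by simp
  then show ?thesis by (rule ab_group_on_idem_eq_zero[OF ext_ab_group[OF C' A] ctr_closed[OF A z x]])
qed

lemma cov_ezero:
  assumes C: "C \<in> Ob K" and a: "a \<in> hom K A B"
  shows "cov E C a (ezero E C A) = ezero E C B"
proof -
  have A: "A \<in> Ob K" and B: "B \<in> Ob K" using hom_Ob[OF a] by auto
  have G: "ab_group_on (bifun.Ex E C A) (eadd E C A) (ezero E C A) (eneg E C A)"
    by (rule ext_ab_group[OF C A])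
  have z: "ezero E C A \<in> bifun.Ex E C A" by (rule ab_group_on_zero_mem[OF G])
  have "eadd E C B (cov E C a (ezero E C A)) (cov E C a (ezero E C A)) = cov E C a (ezero E C A)"
    using cov_eadd[OF C a z z] ab_group_on_add_zero[OF G z] by simp
  then show ?thesis
    by (rule ab_group_on_idem_eq_zero[OF ext_ab_group[OF C B] cov_closed[OF C a z]])
qed

lemma cov_id_minus_comp:
  assumes C: "C \<in> Ob K" and a: "a \<in> hom K A B" and s: "s \<in> hom K B A"
    and x: "x \<in> bifun.Ex E C A" and ax: "cov E C a x = ezero E C B"
  shows "cov E C (ad K (idn K A) (ng K (cp K s a))) x = x"
proof -
  have A: "A \<in> Ob K" using hom_Ob[OF a] by auto
  have G: "ab_group_on (bifun.Ex E C A) (eadd E C A) (ezero E C A) (eneg E C A)"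
    by (rule ext_ab_group[OF C A])
  have sa: "cp K s a \<in> hom K A A" by (rule comp_hom[OF a s])
  have nsa: "ng K (cp K s a) \<in> hom K A A" by (rule neg_hom[OF sa])
  have "cov E C (cp K s a) x = ezero E C A"
    using cov_comp[OF C a s x] ax cov_ezero[OF C s] by simp
  moreover have "eadd E C A (cov E C (cp K s a) x) (cov E C (ng K (cp K s a)) x) = ezero E C A"
    using cov_add[OF C sa nsa x] add_neg[OF sa] cov_zero[OF C A A x] by simp
  ultimately have "cov E C (ng K (cp K s a)) x = ezero E C A"
    using ab_group_on_zero_add[OF G cov_closed[OF C nsa x]] by simp
  then show ?thesis
    using cov_add[OF C id_hom[OF A] nsa x] cov_id[OF C A x] ab_group_on_add_zero[OF G x] by simp
qed

end

lemma EExt_Ar_iff: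
  "((C, A, \<alpha>), (D, B, \<beta>), (a, c)) \<in> Ar (EExt K E) \<longleftrightarrow>
    C \<in> Ob K \<and> A \<in> Ob K \<and> \<alpha> \<in> bifun.Ex E C A \<and> D \<in> Ob K \<and> B \<in> Ob K \<and> \<beta> \<in> bifun.Ex E D B \<and>
    a \<in> hom K A B \<and> c \<in> hom K C D \<and> cov E C a \<alpha> = ctr E c B \<beta>"
  by (simp add: EExt_def)

lemma EExt_dm [simp]: "dm (EExt K E) (X, Y, m) = X"
  and EExt_cd [simp]: "cd (EExt K E) (X, Y, m) = Y"
  and EExt_cp [simp]: "cp (EExt K E) (Y', Z, (b, d)) (X, Y, (a, c)) = (X, Z, (cp K b a, cp K d c))"
  and EExt_idn [simp]: "idn (EExt K E) (C, A, \<alpha>) = ((C, A, \<alpha>), (C, A, \<alpha>), (idn K A, idn K C))"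
  and EExt_zr [simp]:
    "zr (EExt K E) (C, A, \<alpha>) (D, B, \<beta>) = ((C, A, \<alpha>), (D, B, \<beta>), (zr K A B, zr K C D))"
  by (simp_all add: EExt_def)

lemma EExt_hom_iff: "(X, Y, m) \<in> hom (EExt K E) X' Y' \<longleftrightarrow> (X, Y, m) \<in> Ar (EExt K E) \<and> X = X' \<and> Y = Y'"
  by (simp add: hom_def)

lemma is_retraction_EExt:
  assumes "is_retraction (EExt K E) ((C, A, \<alpha>), (D, B, \<beta>), (a, c))"
  shows "((C, A, \<alpha>), (D, B, \<beta>), (a, c)) \<in> Ar (EExt K E)" "is_retraction K a" "is_retraction K c"
proof -
  obtain s where s: "s \<in> hom (EExt K E) (D, B, \<beta>) (C, A, \<alpha>)"
      "cp (EExt K E) ((C, A, \<alpha>), (D, B, \<beta>), (a, c)) s = idn (EExt K E) (D, B, \<beta>)"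
    using assms unfolding is_retraction_def by auto
  obtain a' c' where s_def: "s = ((D, B, \<beta>), (C, A, \<alpha>), (a', c'))"
    using s(1) unfolding hom_def by (cases s) auto
  show "((C, A, \<alpha>), (D, B, \<beta>), (a, c)) \<in> Ar (EExt K E)"
    using assms unfolding is_retraction_def by simp
  then have "a \<in> hom K A B" "c \<in> hom K C D" unfolding EExt_Ar_iff by simp_all
  moreover have "a' \<in> hom K B A" "c' \<in> hom K D C"
    using s(1) unfolding s_def EExt_hom_iff EExt_Ar_iff by simp_all
  moreover have "cp K a a' = idn K B" "cp K c c' = idn K D"
    using s(2) unfolding s_def by simp_all
  ultimately show "is_retraction K a" "is_retraction K c"
    unfolding is_retraction_def hom_def by auto
qed

context biadditive_bifunctor
begin

lemma EExt_kernel_factor: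
  assumes ka: "is_kernel K a ka" and kc: "is_kernel K c kc"
    and a: "a \<in> hom K A B" and c: "c \<in> hom K C D" and \<alpha>: "\<alpha> \<in> bifun.Ex E C A"
    and p: "p \<in> hom K A (dm K ka)" "cp K p ka = idn K (dm K ka)"
    and t: "((G, H, \<gamma>), (C, A, \<alpha>), (u, v)) \<in> Ar (EExt K E)"
    and au: "cp K a u = zr K H B" and cv: "cp K c v = zr K G D"
  defines "\<alpha>0 \<equiv> cov E (dm K kc) p (ctr E kc A \<alpha>)"
  shows "\<exists>!w. w \<in> hom (EExt K E) (G, H, \<gamma>) (dm K kc, dm K ka, \<alpha>0) \<and>
    cp (EExt K E) ((dm K kc, dm K ka, \<alpha>0), (C, A, \<alpha>), (ka, kc)) w = ((G, H, \<gamma>), (C, A, \<alpha>), (u, v))"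
proof -
  let ?A0 = "dm K ka" and ?C0 = "dm K kc"
  have kah: "ka \<in> hom K ?A0 A" and kch: "kc \<in> hom K ?C0 C"
    using is_kernel_hom[OF ka a] is_kernel_hom[OF kc c] .
  have A: "A \<in> Ob K" and A0: "?A0 \<in> Ob K" and C0: "?C0 \<in> Ob K"
    using hom_Ob[OF kah] hom_Ob[OF kch] by auto
  have G: "G \<in> Ob K" and \<gamma>: "\<gamma> \<in> bifun.Ex E G H" and u: "u \<in> hom K H A" and v: "v \<in> hom K G C"
    and uv: "cov E G u \<gamma> = ctr E v A \<alpha>"
    using t unfolding EExt_Ar_iff by simp_all
  have \<xi>: "ctr E kc A \<alpha> \<in> bifun.Ex E ?C0 A" by (rule ctr_closed[OF A kch \<alpha>])
  have \<alpha>0: "\<alpha>0 \<in> bifun.Ex E ?C0 ?A0" unfolding \<alpha>0_def by (rule cov_closed[OF C0 p(1) \<xi>])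
  obtain u' where u': "u' \<in> hom K H ?A0" "cp K ka u' = u"
    using is_kernel_factor[OF ka a u au] by (blast dest: ex1_implies_ex)
  obtain v' where v': "v' \<in> hom K G ?C0" "cp K kc v' = v"
    using is_kernel_factor[OF kc c v cv] by (blast dest: ex1_implies_ex)
  have u'\<gamma>: "cov E G u' \<gamma> \<in> bifun.Ex E G ?A0" by (rule cov_closed[OF G u'(1) \<gamma>])
  have "ctr E v' ?A0 \<alpha>0 = cov E G p (ctr E v' A (ctr E kc A \<alpha>))"
    unfolding \<alpha>0_def by (rule ctr_cov_commute[OF p(1) v'(1) \<xi>])
  also have "\<dots> = cov E G p (cov E G u \<gamma>)"
    using ctr_comp[OF A v'(1) kch \<alpha>] v'(2) uv by simp
  also have "\<dots> = cov E G (cp K p ka) (cov E G u' \<gamma>)"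
    using cov_comp[OF G u'(1) kah \<gamma>] cov_comp[OF G kah p(1) u'\<gamma>] u'(2) by simp
  also have "\<dots> = cov E G u' \<gamma>"
    using p(2) cov_id[OF G A0 u'\<gamma>] by simp
  finally have m: "((G, H, \<gamma>), (?C0, ?A0, \<alpha>0), (u', v')) \<in> Ar (EExt K E)"
    using t u'(1) v'(1) C0 A0 \<alpha>0 unfolding EExt_Ar_iff by simp
  show ?thesis
  proof (rule ex1I[of _ "((G, H, \<gamma>), (?C0, ?A0, \<alpha>0), (u', v'))"])
    show "((G, H, \<gamma>), (?C0, ?A0, \<alpha>0), (u', v')) \<in> hom (EExt K E) (G, H, \<gamma>) (?C0, ?A0, \<alpha>0) \<and>
      cp (EExt K E) ((?C0, ?A0, \<alpha>0), (C, A, \<alpha>), (ka, kc)) ((G, H, \<gamma>), (?C0, ?A0, \<alpha>0), (u', v')) =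
      ((G, H, \<gamma>), (C, A, \<alpha>), (u, v))"
      using m u'(2) v'(2) by (simp add: EExt_hom_iff)
  next
    fix w assume w: "w \<in> hom (EExt K E) (G, H, \<gamma>) (?C0, ?A0, \<alpha>0) \<and>
      cp (EExt K E) ((?C0, ?A0, \<alpha>0), (C, A, \<alpha>), (ka, kc)) w = ((G, H, \<gamma>), (C, A, \<alpha>), (u, v))"
    then obtain u1 v1 where w_def: "w = ((G, H, \<gamma>), (?C0, ?A0, \<alpha>0), (u1, v1))"
      unfolding hom_def by (cases w) auto
    have "u1 \<in> hom K H ?A0" "v1 \<in> hom K G ?C0" "cp K ka u1 = cp K ka u'" "cp K kc v1 = cp K kc v'"
      using w u'(2) v'(2) unfolding w_def EExt_hom_iff EExt_Ar_iff by simp_all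
    then show "w = ((G, H, \<gamma>), (?C0, ?A0, \<alpha>0), (u', v'))"
      unfolding w_def using kernel_cancel[OF ka a] kernel_cancel[OF kc c] u'(1) v'(1) by simp
  qed
qed

lemma is_kernel_EExt:
  assumes r: "((C, A, \<alpha>), (D, B, \<beta>), (a, c)) \<in> Ar (EExt K E)"
    and ka: "is_kernel K a ka" and kc: "is_kernel K c kc"
    and p: "p \<in> hom K A (dm K ka)" "cp K p ka = idn K (dm K ka)"
    and fixed: "cov E (dm K kc) (cp K ka p) (ctr E kc A \<alpha>) = ctr E kc A \<alpha>"
  defines "\<alpha>0 \<equiv> cov E (dm K kc) p (ctr E kc A \<alpha>)"
  shows "is_kernel (EExt K E) ((C, A, \<alpha>), (D, B, \<beta>), (a, c))
    ((dm K kc, dm K ka, \<alpha>0), (C, A, \<alpha>), (ka, kc))"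
proof -
  let ?A0 = "dm K ka" and ?C0 = "dm K kc"
  have A: "A \<in> Ob K" and \<alpha>: "\<alpha> \<in> bifun.Ex E C A" and a: "a \<in> hom K A B" and c: "c \<in> hom K C D"
    using r unfolding EExt_Ar_iff by simp_all
  have kah: "ka \<in> hom K ?A0 A" and kch: "kc \<in> hom K ?C0 C"
    using is_kernel_hom[OF ka a] is_kernel_hom[OF kc c] .
  have A0: "?A0 \<in> Ob K" and C0: "?C0 \<in> Ob K" and C: "C \<in> Ob K"
    using hom_Ob[OF kah] hom_Ob[OF kch] by auto
  have \<xi>: "ctr E kc A \<alpha> \<in> bifun.Ex E ?C0 A" by (rule ctr_closed[OF A kch \<alpha>])
  have "cov E ?C0 ka \<alpha>0 = ctr E kc A \<alpha>"
    unfolding \<alpha>0_def using cov_comp[OF C0 p(1) kah \<xi>] fixed by simp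
  then have \<kappa>: "((?C0, ?A0, \<alpha>0), (C, A, \<alpha>), (ka, kc)) \<in> Ar (EExt K E)"
    using C0 A0 cov_closed[OF C0 p(1) \<xi>] C A \<alpha> kah kch unfolding EExt_Ar_iff \<alpha>0_def by simp
  show ?thesis
    unfolding is_kernel_def
  proof (intro conjI ballI impI)
    show "cp (EExt K E) ((C, A, \<alpha>), (D, B, \<beta>), (a, c)) ((?C0, ?A0, \<alpha>0), (C, A, \<alpha>), (ka, kc)) =
      zr (EExt K E) (dm (EExt K E) ((?C0, ?A0, \<alpha>0), (C, A, \<alpha>), (ka, kc)))
        (cd (EExt K E) ((C, A, \<alpha>), (D, B, \<beta>), (a, c)))"
      using is_kernel_comp[OF ka a] is_kernel_comp[OF kc c] by simp
  next
    fix t assume t: "t \<in> Ar (EExt K E)"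
      and t_r: "cd (EExt K E) t = dm (EExt K E) ((C, A, \<alpha>), (D, B, \<beta>), (a, c)) \<and>
        cp (EExt K E) ((C, A, \<alpha>), (D, B, \<beta>), (a, c)) t =
        zr (EExt K E) (dm (EExt K E) t) (cd (EExt K E) ((C, A, \<alpha>), (D, B, \<beta>), (a, c)))"
    obtain G H \<gamma> u v where t_def: "t = ((G, H, \<gamma>), (C, A, \<alpha>), (u, v))"
      using t_r by (cases t) auto
    have "cp K a u = zr K H B" "cp K c v = zr K G D" using t_r unfolding t_def by simp_all
    then show "\<exists>!w. w \<in> hom (EExt K E) (dm (EExt K E) t)
        (dm (EExt K E) ((?C0, ?A0, \<alpha>0), (C, A, \<alpha>), (ka, kc))) \<and>
      cp (EExt K E) ((?C0, ?A0, \<alpha>0), (C, A, \<alpha>), (ka, kc)) w = t"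
      using EExt_kernel_factor[OF ka kc a c \<alpha> p t[unfolded t_def]] unfolding t_def \<alpha>0_def by simp
  qed (use \<kappa> in simp_all)
qed

lemma EExt_retraction_has_kernel:
  assumes r: "((C, A, \<alpha>), (D, B, \<beta>), (a, c)) \<in> Ar (EExt K E)" and a_ret: "is_retraction K a"
    and ka: "is_kernel K a ka" and kc: "is_kernel K c kc"
  shows "\<exists>\<kappa>. is_kernel (EExt K E) ((C, A, \<alpha>), (D, B, \<beta>), (a, c)) \<kappa>"
proof -
  have A: "A \<in> Ob K" and B: "B \<in> Ob K" and D: "D \<in> Ob K" and \<alpha>: "\<alpha> \<in> bifun.Ex E C A"
    and \<beta>: "\<beta> \<in> bifun.Ex E D B" and a: "a \<in> hom K A B" and c: "c \<in> hom K C D"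
    and ac: "cov E C a \<alpha> = ctr E c B \<beta>"
    using r unfolding EExt_Ar_iff by simp_all
  obtain s where s: "s \<in> hom K B A" "cp K a s = idn K B"
    using a_ret a unfolding is_retraction_def hom_def by auto
  obtain p where p: "p \<in> hom K A (dm K ka)" "cp K p ka = idn K (dm K ka)"
      "cp K ka p = ad K (idn K A) (ng K (cp K s a))"
    using retraction_kernel_split[OF a s ka] .
  let ?C0 = "dm K kc"
  have kch: "kc \<in> hom K ?C0 C" by (rule is_kernel_hom[OF kc c])
  have C0: "?C0 \<in> Ob K" using hom_Ob[OF kch] by auto
  have "cov E ?C0 a (ctr E kc A \<alpha>) = ctr E kc B (ctr E c B \<beta>)"
    using ctr_cov_commute[OF a kch \<alpha>] ac by simp
  also have "\<dots> = ctr E (zr K ?C0 D) B \<beta>"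
    using ctr_comp[OF B kch c \<beta>] is_kernel_comp[OF kc c] by simp
  also have "\<dots> = ezero E ?C0 B" by (rule ctr_zero[OF C0 D B \<beta>])
  finally have "cov E ?C0 (cp K ka p) (ctr E kc A \<alpha>) = ctr E kc A \<alpha>"
    unfolding p(3) by (rule cov_id_minus_comp[OF C0 a s(1) ctr_closed[OF A kch \<alpha>]])
  then show ?thesis using is_kernel_EExt[OF r ka kc p(1,2)] by blast
qed

theorem weakly_idempotent_complete_EExt:
  assumes "weakly_idempotent_complete K"
  shows "weakly_idempotent_complete (EExt K E)"
  unfolding weakly_idempotent_complete_def
proof (intro allI impI)
  fix r assume r: "is_retraction (EExt K E) r"
  obtain C A \<alpha> D B \<beta> a c where r_def: "r = ((C, A, \<alpha>), (D, B, \<beta>), (a, c))"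
    by (cases r) auto
  note r_parts = is_retraction_EExt[OF r[unfolded r_def]]
  obtain ka kc where "is_kernel K a ka" "is_kernel K c kc"
    using assms r_parts(2,3) unfolding weakly_idempotent_complete_def by blast
  then show "\<exists>\<kappa>. is_kernel (EExt K E) r \<kappa>"
    unfolding r_def by (rule EExt_retraction_has_kernel[OF r_parts(1,2)])
qed

end

theorem proposition6p4:
  fixes n :: nat
    and K :: "('o, 'm) acat"
    and E :: "('o, 'm, 'e) bifun"
    and s :: "'o \<Rightarrow> 'o \<Rightarrow> 'e \<Rightarrow> (nat \<Rightarrow> 'm) set"
  assumes "1 \<le> n"
    and "n_exangulated n K E s"
    and "weakly_idempotent_complete K"
  shows "weakly_idempotent_complete (EExt K E)"
proof -
  have "additive K" and "biadditive_functor K E"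
    using assms(2) unfolding n_exangulated_def by simp_all
  then have "biadditive_bifunctor K E"
    unfolding additive_def by unfold_locales simp_all
  then show ?thesis using assms(3) by (rule biadditive_bifunctor.weakly_idempotent_complete_EExt)
qed

end
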